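(* Let $\alpha_n$ denote the number of permutations $\pi \in S_n$ that avoid both $21\text{-}34$ and $34\text{-}21$ as generalized patterns, and let $\alpha_n(21\text{-}34)$ denote the number of $\pi\in S_n$ avoiding $21\text{-}34$. Then $$\lim_{n\to\infty}\left(\frac{\alpha_n}{n!}\right)^{1/n} = \frac{1}{2\log 2},$$ and consequently $\alpha_n(21\text{-}34) \ge \alpha_n = \left(\frac{1}{2\log 2} + o(1)\right)^n n!$.
   Context: A permutation $\pi \in S_n$ contains the generalized pattern $21\text{-}34$ if there exist indices $1 \le i < i+1 < j < j+1 \le n$ such that $(\pi(i),\pi(i+1),\pi(j),\pi(j+1))$ is order-isomorphic to $(2,1,3,4)$, i.e. $\pi(i+1) < \pi(i) < \pi(j) < \pi(j+1)$; it contains $34\text{-}21$ if there exist such indices with $(\pi(i),\pi(i+1),\pi(j),\pi(j+1))$ order-isomorphic to $(3,4,2,1)$, i.e. $\pi(j+1) < \pi(j) < \pi(i) < \pi(i+1)$. A permutation avoids a generalized pattern if it does not contain it. *)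

theory Defs
  imports "HOL-Analysis.Analysis" "HOL-Combinatorics.Permutations"
begin

definition contains_21_34 :: "nat \<Rightarrow> (nat \<Rightarrow> nat) \<Rightarrow> bool" where
  "contains_21_34 n p \<longleftrightarrow>
     (\<exists>i j. 1 \<le> i \<and> i + 1 < j \<and> j + 1 \<le> n \<and>
            p (i+1) < p i \<and> p i < p j \<and> p j < p (j+1))"

definition contains_34_21 :: "nat \<Rightarrow> (nat \<Rightarrow> nat) \<Rightarrow> bool" where
  "contains_34_21 n p \<longleftrightarrow>
     (\<exists>i j. 1 \<le> i \<and> i + 1 < j \<and> j + 1 \<le> n \<and>
            p (j+1) < p j \<and> p j < p i \<and> p i < p (i+1))"

definition alpha :: "nat \<Rightarrow> nat" where
  "alpha n = card {p. p permutes {1..n} \<and> \<not> contains_21_34 n p \<and> \<not> contains_34_21 n p}"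

definition alpha_21_34 :: "nat \<Rightarrow> nat" where
  "alpha_21_34 n = card {p. p permutes {1..n} \<and> \<not> contains_21_34 n p}"

end

theory Submission
  imports Defs "HOL-Combinatorics.Multiset_Permutations" "HOL-Real_Asymp.Real_Asymp"
begin

text \<open>
  A permutation avoids both patterns iff some threshold t separates its ascents from its
  descents: every ascent starts at a value \<open>\<le> t\<close> and every descent at a value \<open>> t\<close>
  (take t to be the largest value starting an ascent). Its one-line word is then an alternation
  of increasing runs of small values and decreasing runs of large values.

  Upper bound: peeling off runs gives a recursion which, weighted by \<open>r\<close> per small and \<open>s\<close> per
  large value with \<open>r + s = 2 ln 2\<close>, bounds the number of such words by \<open>6 t! (n - t)! / (r^t s^(n-t))\<close>;
  choosing \<open>r : s = t : (n - t)\<close> and bounding the central binomial term gives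
  \<open>\<alpha>\<^sub>n \<le> 6 (n + 1)\<^sup>2 n! / (2 ln 2)\<^sup>n\<close>.

  Lower bound: interleaving two ordered set partitions of \<open>{1..h}\<close> and \<open>{h+1..2h}\<close> into the same
  number of blocks gives distinct threshold words, so \<open>\<alpha>\<^sub>n\<close> is at least the square of a maximal
  term of the Fubini number \<open>F\<^sub>h\<close>, \<open>h = n div 2\<close>. The recursion \<open>F\<^sub>h = \<Sum> (h choose d) F\<^sub>h\<^sub>-\<^sub>d\<close> yields
  \<open>F\<^sub>h \<ge> C h! / y\<^sup>h\<close> for every \<open>y > ln 2\<close>, because \<open>e\<^sup>y - 1 > 1\<close>.
\<close>

section \<open>Threshold words\<close>

fun ascent_threshold :: "nat \<Rightarrow> nat list \<Rightarrow> bool" where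
  "ascent_threshold t (x # y # zs) \<longleftrightarrow> (x \<le> t \<longleftrightarrow> x < y) \<and> ascent_threshold t (y # zs)"
| "ascent_threshold t _ \<longleftrightarrow> True"

lemma ascent_threshold_Cons:
  "ascent_threshold t (x # xs) \<longleftrightarrow> ascent_threshold t xs \<and> (xs \<noteq> [] \<longrightarrow> (x \<le> t \<longleftrightarrow> x < hd xs))"
  by (cases xs) auto

lemma ascent_threshold_append:
  "ascent_threshold t (xs @ ys) \<longleftrightarrow> ascent_threshold t xs \<and> ascent_threshold t ys \<and>
     (xs \<noteq> [] \<and> ys \<noteq> [] \<longrightarrow> (last xs \<le> t \<longleftrightarrow> last xs < hd ys))"
proof (induction t xs rule: ascent_threshold.induct)
  case ("2_2" t x)
  then show ?case by (cases ys) auto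
qed auto

lemma ascent_threshold_nth:
  "ascent_threshold t xs \<longleftrightarrow> (\<forall>i. Suc i < length xs \<longrightarrow> (xs ! i \<le> t \<longleftrightarrow> xs ! i < xs ! Suc i))"
proof (induction t xs rule: ascent_threshold.induct)
  case (1 t x y zs)
  have "(\<forall>i. Suc i < length (x # y # zs) \<longrightarrow> P i) \<longleftrightarrow> P 0 \<and> (\<forall>i. Suc i < length (y # zs) \<longrightarrow> P (Suc i))"
    for P by (auto simp: less_Suc_eq_0_disj)
  then show ?case using 1 by simp
qed auto

definition threshold_words :: "nat \<Rightarrow> nat set \<Rightarrow> nat list set" where
  "threshold_words t A = {xs \<in> permutations_of_set A. ascent_threshold t xs}"

section \<open>Permutations avoiding both patterns\<close>

definition perm_word :: "nat \<Rightarrow> (nat \<Rightarrow> nat) \<Rightarrow> nat list" where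
  "perm_word n p = map p [1..<Suc n]"

lemma length_perm_word [simp]: "length (perm_word n p) = n"
  by (simp add: perm_word_def)

lemma nth_perm_word [simp]: "i < n \<Longrightarrow> perm_word n p ! i = p (Suc i)"
  by (simp add: perm_word_def del: upt_Suc)

lemma perm_word_surj:
  assumes "xs \<in> permutations_of_set {1..n}"
  obtains p where "p permutes {1..n}" "perm_word n p = xs"
proof -
  have dist: "distinct xs" and set: "set xs = {1..n}"
    using assms by (auto simp: permutations_of_set_def)
  then have len: "length xs = n"
    using distinct_card by fastforce
  define p where "p i = (if i \<in> {1..n} then xs ! (i - 1) else i)" for i
  have "bij_betw ((!) xs \<circ> (\<lambda>i. i - 1)) {1..n} {1..n}"
  proof (rule bij_betw_trans)
    show "bij_betw (\<lambda>i. i - 1) {1..n} {..<n}"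
      by (rule bij_betw_byWitness[where f' = Suc]) auto
    show "bij_betw ((!) xs) {..<n} {1..n}"
      using bij_betw_nth[OF dist] len set by simp
  qed
  moreover have "((!) xs \<circ> (\<lambda>i. i - 1)) i = p i" if "i \<in> {1..n}" for i
    using that by (simp add: p_def)
  ultimately have "p permutes {1..n}"
    by (intro bij_imp_permutes) (auto simp: p_def elim!: bij_betw_cong[THEN iffD1, rotated])
  moreover have "perm_word n p = xs"
    by (rule nth_equalityI) (auto simp: len p_def)
  ultimately show ?thesis by (rule that)
qed

lemma bij_betw_perm_word:
  "bij_betw (perm_word n) {p. p permutes {1..n}} (permutations_of_set {1..n})"
proof (rule bij_betw_imageI)
  show "inj_on (perm_word n) {p. p permutes {1..n}}"
  proof (rule inj_onI, rule ext)
    fix p q i assume p: "p \<in> {p. p permutes {1..n}}" and q: "q \<in> {p. p permutes {1..n}}"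
      and eq: "perm_word n p = perm_word n q"
    show "p i = q i"
    proof (cases "i \<in> {1..n}")
      case True
      then show ?thesis using arg_cong[OF eq, of "\<lambda>xs. xs ! (i - 1)"] by (cases i) auto
    next
      case False
      then show ?thesis using p q by (simp add: permutes_not_in)
    qed
  qed
  have "perm_word n ` {p. p permutes {1..n}} \<subseteq> permutations_of_set {1..n}"
    by (auto simp: perm_word_def permutations_of_set_def permutes_image distinct_map
        permutes_inj_on atLeastLessThanSuc_atLeastAtMost simp del: upt_Suc)
  moreover have "xs \<in> perm_word n ` {p. p permutes {1..n}}" if "xs \<in> permutations_of_set {1..n}" for xs
    using that by (rule perm_word_surj) blast
  ultimately show "perm_word n ` {p. p permutes {1..n}} = permutations_of_set {1..n}" by blast
qed

lemma ascent_threshold_perm_word: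
  "ascent_threshold t (perm_word n p) \<longleftrightarrow> (\<forall>i. 1 \<le> i \<and> i < n \<longrightarrow> (p i \<le> t \<longleftrightarrow> p i < p (Suc i)))"
proof -
  have shift: "(\<forall>i. Suc i < n \<longrightarrow> P (Suc i)) \<longleftrightarrow> (\<forall>i. 1 \<le> i \<and> i < n \<longrightarrow> P i)" for P
  proof (intro iffI allI impI)
    fix i assume "\<forall>i. Suc i < n \<longrightarrow> P (Suc i)" and "1 \<le> i \<and> i < n"
    then show "P i" by (cases i) auto
  qed auto
  show ?thesis
    using shift[of "\<lambda>i. p i \<le> t \<longleftrightarrow> p i < p (Suc i)"] by (simp add: ascent_threshold_nth)
qed

lemma ascent_below_descent:
  assumes p: "p permutes {1..n}" and avoid: "\<not> contains_21_34 n p" "\<not> contains_34_21 n p"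
    and asc: "1 \<le> j" "j < n" "p j < p (Suc j)" and desc: "1 \<le> k" "k < n" "p (Suc k) < p k"
  shows "p j < p k"
proof (rule ccontr)
  assume "\<not> p j < p k"
  moreover have "j \<noteq> k" using asc desc by auto
  then have "p j \<noteq> p k" using permutes_inj[OF p] by (auto dest: injD)
  ultimately have lt: "p k < p j" by linarith
  consider "k + 1 < j" | "j + 1 < k" | "j = Suc k" | "k = Suc j"
    using \<open>j \<noteq> k\<close> by linarith
  then show False
  proof cases
    case 1
    then have "contains_21_34 n p"
      unfolding contains_21_34_def using asc desc lt by (intro exI[of _ k] exI[of _ j]) auto
    then show False using avoid by blast
  next
    case 2
    then have "contains_34_21 n p"
      unfolding contains_34_21_def using asc desc lt by (intro exI[of _ j] exI[of _ k]) auto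
    then show False using avoid by blast
  qed (use asc desc lt in auto)
qed

definition max_ascent_value :: "nat \<Rightarrow> (nat \<Rightarrow> nat) \<Rightarrow> nat" where
  "max_ascent_value n p = Max (insert 0 (p ` {j. 1 \<le> j \<and> j < n \<and> p j < p (Suc j)}))"

lemma max_ascent_value_le:
  assumes "p permutes {1..n}"
  shows "max_ascent_value n p \<le> n"
proof -
  have "p j \<le> n" if "1 \<le> j" "j < n" for j
    using permutes_in_image[OF assms, of j] that by simp
  then show ?thesis unfolding max_ascent_value_def by (subst Max_le_iff) auto
qed

lemma ascent_threshold_max_ascent_value:
  assumes p: "p permutes {1..n}" and avoid: "\<not> contains_21_34 n p" "\<not> contains_34_21 n p"
  shows "ascent_threshold (max_ascent_value n p) (perm_word n p)"
  unfolding ascent_threshold_perm_word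
proof (intro allI impI iffI)
  define T where "T = insert 0 (p ` {j. 1 \<le> j \<and> j < n \<and> p j < p (Suc j)})"
  have "finite T" "T \<noteq> {}" and t: "max_ascent_value n p = Max T"
    by (simp_all add: T_def max_ascent_value_def)
  fix i assume i: "1 \<le> i \<and> i < n"
  show "p i < p (Suc i)" if "p i \<le> max_ascent_value n p"
  proof (rule ccontr)
    assume "\<not> p i < p (Suc i)"
    moreover have "p (Suc i) \<noteq> p i"
      by (simp add: inj_eq[OF permutes_inj[OF p]])
    ultimately have desc: "p (Suc i) < p i" by linarith
    have "Max T \<in> T" using Max_in[OF \<open>finite T\<close> \<open>T \<noteq> {}\<close>] .
    then consider "Max T = 0" | j where "1 \<le> j" "j < n" "p j < p (Suc j)" "Max T = p j"
      unfolding T_def by auto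
    then show False
    proof cases
      case 1
      moreover have "1 \<le> p i" using permutes_in_image[OF p, of i] i by simp
      ultimately show False using that t by simp
    next
      case 2
      then show False
        using that t i ascent_below_descent[OF p avoid 2(1-3) _ _ desc] by simp
    qed
  qed
  show "p i \<le> max_ascent_value n p" if "p i < p (Suc i)"
  proof -
    have "p i \<in> T" unfolding T_def using that i by (intro insertI2 imageI) simp
    then show ?thesis unfolding t using \<open>finite T\<close> by (rule Max_ge[rotated])
  qed
qed

lemma avoids_both_if_ascent_threshold:
  assumes "ascent_threshold t (perm_word n p)"
  shows "\<not> contains_21_34 n p \<and> \<not> contains_34_21 n p"
proof -
  have t: "p i \<le> t \<longleftrightarrow> p i < p (Suc i)" if "1 \<le> i" "i < n" for i
    using assms that by (simp add: ascent_threshold_perm_word)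
  show ?thesis
  proof (unfold contains_21_34_def contains_34_21_def, intro conjI notI)
    assume "\<exists>i j. 1 \<le> i \<and> i + 1 < j \<and> j + 1 \<le> n \<and> p (i + 1) < p i \<and> p i < p j \<and> p j < p (j + 1)"
    then obtain i j where "1 \<le> i" "i + 1 < j" "j + 1 \<le> n" "p (Suc i) < p i" "p i < p j" "p j < p (Suc j)"
      by auto
    with t[of i] t[of j] show False by simp
  next
    assume "\<exists>i j. 1 \<le> i \<and> i + 1 < j \<and> j + 1 \<le> n \<and> p (j + 1) < p j \<and> p j < p i \<and> p i < p (i + 1)"
    then obtain i j where "1 \<le> i" "i + 1 < j" "j + 1 \<le> n" "p (Suc j) < p j" "p j < p i" "p i < p (Suc i)"
      by auto
    with t[of i] t[of j] show False by simp
  qed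
qed

lemma avoids_both_iff_ascent_threshold:
  assumes "p permutes {1..n}"
  shows "\<not> contains_21_34 n p \<and> \<not> contains_34_21 n p \<longleftrightarrow>
           (\<exists>t\<le>n. ascent_threshold t (perm_word n p))"
  using ascent_threshold_max_ascent_value[OF assms] max_ascent_value_le[OF assms]
    avoids_both_if_ascent_threshold by blast

lemma alpha_eq_card_threshold_words: "alpha n = card (\<Union>t\<le>n. threshold_words t {1..n})"
proof -
  have "bij_betw (perm_word n)
      {p \<in> {p. p permutes {1..n}}. \<not> contains_21_34 n p \<and> \<not> contains_34_21 n p}
      {xs \<in> permutations_of_set {1..n}. \<exists>t\<le>n. ascent_threshold t xs}"
    by (rule bij_betw_Collect[OF bij_betw_perm_word]) (simp add: avoids_both_iff_ascent_threshold)
  moreover have "{xs \<in> permutations_of_set {1..n}. \<exists>t\<le>n. ascent_threshold t xs}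
      = (\<Union>t\<le>n. threshold_words t {1..n})"
    by (auto simp: threshold_words_def)
  ultimately show ?thesis
    unfolding alpha_def by (simp add: bij_betw_same_card)
qed

lemma alpha_le_card_threshold_words_sum: "alpha n \<le> (\<Sum>t\<le>n. card (threshold_words t {1..n}))"
  unfolding alpha_eq_card_threshold_words by (rule card_UN_le) simp

lemma card_threshold_words_le_alpha:
  assumes "t \<le> n"
  shows "card (threshold_words t {1..n}) \<le> alpha n"
  unfolding alpha_eq_card_threshold_words using assms
  by (intro card_mono finite_UN_I) (auto simp: threshold_words_def intro: finite_subset)

lemma alpha_0: "alpha 0 = 1"
  by (simp add: alpha_def contains_21_34_def contains_34_21_def)

lemma alpha_le_alpha_21_34: "alpha n \<le> alpha_21_34 n"
  unfolding alpha_def alpha_21_34_def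
  by (intro card_mono) (auto intro: finite_subset[OF _ finite_permutations[of "{1..n}"]])

section \<open>Upper bound\<close>

definition threshold_side :: "nat \<Rightarrow> bool \<Rightarrow> nat set \<Rightarrow> nat set" where
  "threshold_side t b A = {x \<in> A. (x \<le> t) = b}"

definition threshold_words_from :: "nat \<Rightarrow> bool \<Rightarrow> nat set \<Rightarrow> nat list set" where
  "threshold_words_from t b A = {xs \<in> threshold_words t A. xs = [] \<or> (hd xs \<le> t) = b}"

definition monotone_run :: "bool \<Rightarrow> nat set \<Rightarrow> nat list" where
  "monotone_run b D = (if b then sorted_list_of_set D else rev (sorted_list_of_set D))"

lemma threshold_words_eq_Un:
  "threshold_words t A = threshold_words_from t True A \<union> threshold_words_from t False A"
  by (auto simp: threshold_words_from_def)

lemma finite_threshold_words_from [simp]: "finite (threshold_words_from t b A)"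
  by (rule finite_subset[of _ "permutations_of_set A"])
     (auto simp: threshold_words_from_def threshold_words_def)

lemma threshold_words_from_empty [simp]: "threshold_words_from t b {} = {[]}"
  by (auto simp: threshold_words_from_def threshold_words_def)

lemma set_monotone_run [simp]: "finite D \<Longrightarrow> set (monotone_run b D) = D"
  by (simp add: monotone_run_def)

lemma ascent_threshold_one_side_eq_monotone_run:
  assumes "ascent_threshold t xs" "distinct xs" "\<forall>x\<in>set xs. (x \<le> t) = b"
  shows "xs = monotone_run b (set xs)"
proof -
  have sorted: "sorted_wrt (\<lambda>x y. if b then x < y else y < x) xs"
    using assms by (induction t xs rule: ascent_threshold.induct) auto
  show ?thesis
  proof (cases b)
    case True
    then have "sorted_wrt (<) xs" using sorted by simp
    then show ?thesis
      using True by (simp add: monotone_run_def sorted_list_of_set.idem_if_sorted_distinct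
          strict_sorted_iff)
  next
    case False
    then have "sorted_wrt (<) (rev xs)" using sorted by (simp add: sorted_wrt_rev)
    then have "sorted_list_of_set (set xs) = rev xs"
      using sorted_list_of_set.idem_if_sorted_distinct[of "rev xs"] by (simp add: strict_sorted_iff)
    then show ?thesis using False by (simp add: monotone_run_def)
  qed
qed

lemma threshold_words_from_split:
  assumes xs: "xs \<in> threshold_words_from t b A" "xs \<noteq> []"
  defines "D \<equiv> set (takeWhile (\<lambda>x. (x \<le> t) = b) xs)"
  shows "D \<noteq> {}" "D \<subseteq> threshold_side t b A"
    and "dropWhile (\<lambda>x. (x \<le> t) = b) xs \<in> threshold_words_from t (\<not> b) (A - D)"
    and "xs = monotone_run b D @ dropWhile (\<lambda>x. (x \<le> t) = b) xs"
proof -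
  let ?P = "\<lambda>x. (x \<le> t) = b"
  let ?run = "takeWhile ?P xs" and ?rest = "dropWhile ?P xs"
  have dist: "distinct xs" and set: "set xs = A" and asc: "ascent_threshold t xs"
    and hd: "?P (hd xs)"
    using xs by (auto simp: threshold_words_from_def threshold_words_def permutations_of_set_def)
  have asc_parts: "ascent_threshold t ?run" "ascent_threshold t ?rest"
    using asc ascent_threshold_append[of t ?run ?rest] by simp_all
  have dist_parts: "distinct ?run" "distinct ?rest" "set ?run \<inter> set ?rest = {}"
    using dist distinct_append[of ?run ?rest] by simp_all
  show "D \<noteq> {}" using xs(2) hd unfolding D_def by (cases xs) auto
  show "D \<subseteq> threshold_side t b A"
    using set unfolding D_def threshold_side_def by (auto dest: set_takeWhileD)
  have "set ?run \<union> set ?rest = A"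
    using set set_append[of ?run ?rest] by simp
  then have "set ?rest = A - D"
    using dist_parts(3) unfolding D_def by blast
  moreover have "?rest = [] \<or> (hd ?rest \<le> t) = (\<not> b)"
    using hd_dropWhile[of ?P xs] by auto
  ultimately show "?rest \<in> threshold_words_from t (\<not> b) (A - D)"
    using asc_parts dist_parts
    by (simp add: threshold_words_from_def threshold_words_def permutations_of_set_def)
  have "?run = monotone_run b D"
    unfolding D_def using asc_parts(1) dist_parts(1)
    by (intro ascent_threshold_one_side_eq_monotone_run) (auto dest: set_takeWhileD)
  then show "xs = monotone_run b D @ ?rest" by (metis takeWhile_dropWhile_id)
qed

lemma card_threshold_words_from_le:
  assumes "finite A" "A \<noteq> {}"
  shows "card (threshold_words_from t b A) \<le>
         (\<Sum>D | D \<subseteq> threshold_side t b A \<and> D \<noteq> {}. card (threshold_words_from t (\<not> b) (A - D)))"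
proof -
  let ?Ds = "{D. D \<subseteq> threshold_side t b A \<and> D \<noteq> {}}"
  let ?pairs = "SIGMA D:?Ds. threshold_words_from t (\<not> b) (A - D)"
  have "finite ?Ds" using \<open>finite A\<close> by (simp add: threshold_side_def)
  have "threshold_words_from t b A \<subseteq> (\<lambda>(D, ys). monotone_run b D @ ys) ` ?pairs"
  proof
    fix xs assume xs: "xs \<in> threshold_words_from t b A"
    then have "xs \<noteq> []"
      using \<open>A \<noteq> {}\<close> by (auto simp: threshold_words_from_def threshold_words_def permutations_of_set_def)
    from threshold_words_from_split[OF xs this] show "xs \<in> (\<lambda>(D, ys). monotone_run b D @ ys) ` ?pairs"
      by (intro image_eqI[where x = "(set (takeWhile (\<lambda>x. (x \<le> t) = b) xs),
            dropWhile (\<lambda>x. (x \<le> t) = b) xs)"]) auto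
  qed
  then have "card (threshold_words_from t b A) \<le> card ((\<lambda>(D, ys). monotone_run b D @ ys) ` ?pairs)"
    using \<open>finite ?Ds\<close> by (intro card_mono) auto
  also have "\<dots> \<le> card ?pairs" by (rule card_image_le) (use \<open>finite ?Ds\<close> in auto)
  also have "\<dots> = (\<Sum>D\<in>?Ds. card (threshold_words_from t (\<not> b) (A - D)))"
    by (rule card_SigmaI) (use \<open>finite ?Ds\<close> in auto)
  finally show ?thesis .
qed

lemma sum_nonempty_subsets_by_card:
  fixes g :: "nat \<Rightarrow> 'a::comm_semiring_1"
  assumes "finite B"
  shows "(\<Sum>D | D \<subseteq> B \<and> D \<noteq> {}. g (card D)) = (\<Sum>d=1..card B. of_nat (card B choose d) * g d)"
proof -
  have "{D. D \<subseteq> B \<and> D \<noteq> {}} = (\<Union>d\<in>{1..card B}. {D. D \<subseteq> B \<and> card D = d})"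
    using assms by (auto simp: card_mono Suc_le_eq card_gt_0_iff dest: finite_subset)
  then have "(\<Sum>D | D \<subseteq> B \<and> D \<noteq> {}. g (card D)) =
             (\<Sum>d=1..card B. \<Sum>D | D \<subseteq> B \<and> card D = d. g (card D))"
    using assms by (simp only:) (rule sum.UNION_disjoint, auto)
  also have "\<dots> = (\<Sum>d=1..card B. of_nat (card B choose d) * g d)"
    using assms by (intro sum.cong refl) (simp add: n_subsets)
  finally show ?thesis .
qed

lemma sum_pow_div_fact_le_exp_minus_one:
  fixes r :: real
  assumes "0 \<le> r"
  shows "(\<Sum>d=1..m. r ^ d / fact d) \<le> exp r - 1"
proof -
  have "(\<Sum>d<Suc m. r ^ d / fact d) \<le> (\<Sum>d. r ^ d / fact d)"
    using summable_exp[of r] assms by (intro sum_le_suminf) (auto simp: divide_inverse mult.commute)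
  also have "\<dots> = exp r" by (simp add: exp_def scaleR_conv_of_real field_simps)
  finally show ?thesis by (simp add: lessThan_Suc_atMost atMost_atLeast0 sum.atLeast_Suc_atMost)
qed

lemma sum_nonempty_subsets_pow_fact:
  fixes r :: real
  assumes "finite B" "0 \<le> r"
  shows "(\<Sum>D | D \<subseteq> B \<and> D \<noteq> {}. r ^ card D * fact (card B - card D)) \<le> fact (card B) * (exp r - 1)"
proof -
  have "(\<Sum>D | D \<subseteq> B \<and> D \<noteq> {}. r ^ card D * fact (card B - card D)) =
        (\<Sum>d=1..card B. real (card B choose d) * (r ^ d * fact (card B - d)))"
    by (rule sum_nonempty_subsets_by_card[OF assms(1)])
  also have "\<dots> = fact (card B) * (\<Sum>d=1..card B. r ^ d / fact d)"
    unfolding sum_distrib_left by (intro sum.cong refl) (simp add: binomial_fact)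
  also have "\<dots> \<le> fact (card B) * (exp r - 1)"
    using sum_pow_div_fact_le_exp_minus_one[OF assms(2)] by (intro mult_left_mono) auto
  finally show ?thesis .
qed

lemma mult_max_one_le:
  fixes u v :: real
  assumes "0 \<le> u" "0 \<le> v" "u * v \<le> 1"
  shows "u * max 1 v \<le> max 1 u"
  using assms by (cases "v \<le> 1") (auto simp: mult_left_le)

lemma threshold_side_Diff:
  assumes "D \<subseteq> threshold_side t b A"
  shows "threshold_side t b (A - D) = threshold_side t b A - D"
    and "threshold_side t (\<not> b) (A - D) = threshold_side t (\<not> b) A"
  using assms by (auto simp: threshold_side_def)

lemma card_threshold_words_from_weighted:
  fixes \<rho> :: "bool \<Rightarrow> real"
  assumes \<rho>: "\<And>b. 0 \<le> \<rho> b" "(exp (\<rho> True) - 1) * (exp (\<rho> False) - 1) \<le> 1"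
    and "finite A"
  shows "card (threshold_words_from t b A) * \<rho> b ^ card (threshold_side t b A)
           * \<rho> (\<not> b) ^ card (threshold_side t (\<not> b) A)
         \<le> fact (card (threshold_side t b A)) * fact (card (threshold_side t (\<not> b) A))
           * max 1 (exp (\<rho> b) - 1)"
  using \<open>finite A\<close>
proof (induction A arbitrary: b rule: finite_psubset_induct)
  case (psubset A)
  define P Q where "P = threshold_side t b A" and "Q = threshold_side t (\<not> b) A"
  define M where "M = max 1 (exp (\<rho> (\<not> b)) - 1)"
  let ?W = "\<lambda>D. card (threshold_words_from t (\<not> b) (A - D))"
  have "finite P" using psubset(1) by (simp add: P_def threshold_side_def)
  have step: "?W D * \<rho> b ^ card P * \<rho> (\<not> b) ^ card Q
      \<le> \<rho> b ^ card D * fact (card P - card D) * (fact (card Q) * M)" if D: "D \<subseteq> P" "D \<noteq> {}" for D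
  proof -
    have "card (P - D) = card P - card D" "card D \<le> card P"
      using D(1) \<open>finite P\<close> finite_subset[OF D(1)] by (simp_all add: card_Diff_subset card_mono)
    moreover have "A - D \<subset> A" using D by (auto simp: P_def threshold_side_def)
    ultimately have IH: "?W D * \<rho> (\<not> b) ^ card Q * \<rho> b ^ (card P - card D)
        \<le> fact (card Q) * fact (card P - card D) * M"
      using psubset(2)[of "A - D" "\<not> b"] threshold_side_Diff[of D t b A] D(1)
      by (simp add: P_def Q_def M_def)
    have "\<rho> b ^ card P = \<rho> b ^ card D * \<rho> b ^ (card P - card D)"
      using \<open>card D \<le> card P\<close> by (simp add: power_add[symmetric])
    then have "?W D * \<rho> b ^ card P * \<rho> (\<not> b) ^ card Q
        = \<rho> b ^ card D * (?W D * \<rho> (\<not> b) ^ card Q * \<rho> b ^ (card P - card D))"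
      by (simp add: mult_ac)
    also have "\<dots> \<le> \<rho> b ^ card D * (fact (card Q) * fact (card P - card D) * M)"
      using IH \<rho>(1) by (intro mult_left_mono) auto
    finally show ?thesis by (simp add: mult_ac)
  qed
  show ?case
  proof (cases "A = {}")
    case False
    have "card (threshold_words_from t b A) * \<rho> b ^ card P * \<rho> (\<not> b) ^ card Q
        \<le> (\<Sum>D | D \<subseteq> P \<and> D \<noteq> {}. ?W D * \<rho> b ^ card P * \<rho> (\<not> b) ^ card Q)"
      using card_threshold_words_from_le[OF psubset(1) False, of t b] \<rho>(1)
      unfolding P_def sum_distrib_right[symmetric] of_nat_sum[symmetric]
      by (intro mult_right_mono) (simp_all only: of_nat_le_iff, simp_all)
    also have "\<dots> \<le> (\<Sum>D | D \<subseteq> P \<and> D \<noteq> {}. \<rho> b ^ card D * fact (card P - card D)) * (fact (card Q) * M)"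
      unfolding sum_distrib_right using step by (intro sum_mono) auto
    also have "\<dots> \<le> fact (card P) * (exp (\<rho> b) - 1) * (fact (card Q) * M)"
      using sum_nonempty_subsets_pow_fact[OF \<open>finite P\<close> \<rho>(1)] by (intro mult_right_mono) (auto simp: M_def)
    also have "\<dots> = fact (card P) * fact (card Q) * ((exp (\<rho> b) - 1) * M)" by (simp add: mult_ac)
    also have "\<dots> \<le> fact (card P) * fact (card Q) * max 1 (exp (\<rho> b) - 1)"
      unfolding M_def using \<rho> by (intro mult_left_mono mult_max_one_le) (cases b; simp add: mult.commute)+
    finally show ?thesis by (simp add: P_def Q_def)
  qed (simp add: threshold_side_def)
qed

lemma exp_pair_bounds:
  fixes r s :: real
  assumes "0 \<le> r" "0 \<le> s" "r + s = 2 * ln 2"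
  shows "(exp r - 1) * (exp s - 1) \<le> 1" and "max 1 (exp r - 1) + max 1 (exp s - 1) \<le> 6"
proof -
  define u v where "u = exp r" and "v = exp s"
  have "u * v = exp (ln 2 + ln 2)"
    using assms(3) by (simp add: u_def v_def exp_add[symmetric])
  also have "\<dots> = 4" by (subst exp_add) simp
  finally have "u * v = 4" .
  moreover have "1 \<le> u" "1 \<le> v" using assms(1,2) by (simp_all add: u_def v_def)
  moreover have "(u + v)\<^sup>2 = (u - v)\<^sup>2 + 4 * (u * v)" by (simp add: power2_eq_square algebra_simps)
  ultimately have "4\<^sup>2 \<le> (u + v)\<^sup>2" by simp
  then have "4 \<le> u + v" by (rule power2_le_imp_le) (use \<open>1 \<le> u\<close> \<open>1 \<le> v\<close> in simp)
  then show "(exp r - 1) * (exp s - 1) \<le> 1"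
    using \<open>u * v = 4\<close> by (simp add: u_def v_def algebra_simps)
  have "u \<le> u * v" "v \<le> u * v" using \<open>1 \<le> u\<close> \<open>1 \<le> v\<close> by simp_all
  then have "u \<le> 4" "v \<le> 4" using \<open>u * v = 4\<close> by simp_all
  then show "max 1 (exp r - 1) + max 1 (exp s - 1) \<le> 6" by (simp add: u_def v_def)
qed

lemma card_threshold_side_atLeastAtMost:
  assumes "t \<le> n"
  shows "card (threshold_side t True {1..n}) = t" "card (threshold_side t False {1..n}) = n - t"
proof -
  have "threshold_side t True {1..n} = {1..t}" "threshold_side t False {1..n} = {t + 1..n}"
    using assms by (auto simp: threshold_side_def)
  then show "card (threshold_side t True {1..n}) = t" "card (threshold_side t False {1..n}) = n - t"
    by simp_all
qed

lemma card_threshold_words_weighted: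
  fixes r s :: real
  assumes "0 \<le> r" "0 \<le> s" "r + s = 2 * ln 2" "t \<le> n"
  shows "card (threshold_words t {1..n}) * r ^ t * s ^ (n - t) \<le> 6 * fact t * fact (n - t)"
proof -
  define \<rho> where "\<rho> b = (if b then r else s)" for b
  note bounds = exp_pair_bounds[OF assms(1-3)]
  have "card (threshold_words_from t b {1..n}) * r ^ t * s ^ (n - t)
          \<le> fact t * fact (n - t) * max 1 (exp (\<rho> b) - 1)" for b
    using card_threshold_words_from_weighted[of \<rho> "{1..n}" t b] assms bounds(1)
      card_threshold_side_atLeastAtMost[OF assms(4)]
    by (cases b) (auto simp: \<rho>_def mult_ac)
  note W = this[of True] this[of False]
  have "card (threshold_words t {1..n}) * r ^ t * s ^ (n - t)
      \<le> (card (threshold_words_from t True {1..n}) + card (threshold_words_from t False {1..n}))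
          * r ^ t * s ^ (n - t)"
    unfolding threshold_words_eq_Un using assms(1,2)
    by (intro mult_right_mono) (simp_all only: of_nat_add[symmetric] of_nat_le_iff card_Un_le, simp_all)
  also have "\<dots> \<le> fact t * fact (n - t) * (max 1 (exp r - 1) + max 1 (exp s - 1))"
    using W by (simp add: \<rho>_def algebra_simps)
  also have "\<dots> \<le> fact t * fact (n - t) * 6"
    using bounds(2) by (intro mult_left_mono) auto
  finally show ?thesis by (simp add: mult_ac)
qed

definition binomial_term :: "nat \<Rightarrow> nat \<Rightarrow> nat \<Rightarrow> nat" where
  "binomial_term n t j = (n choose j) * t ^ j * (n - t) ^ (n - j)"

lemma binomial_term_Suc:
  assumes "j < n"
  shows "binomial_term n t (Suc j) * (Suc j * (n - t)) = binomial_term n t j * ((n - j) * t)"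
proof -
  have choose: "(n choose Suc j) * Suc j = (n choose j) * (n - j)"
    using binomial_absorb_comp[of n j] binomial_absorption[of j n] by (simp add: mult.commute)
  have pow: "(n - t) ^ (n - j) = (n - t) ^ (n - Suc j) * (n - t)"
    using assms by (metis Suc_diff_Suc power_Suc2)
  have "binomial_term n t (Suc j) * (Suc j * (n - t))
      = ((n choose Suc j) * Suc j) * t * t ^ j * ((n - t) ^ (n - Suc j) * (n - t))"
    unfolding binomial_term_def power_Suc by (simp only: mult_ac)
  also have "\<dots> = (n choose j) * (n - j) * t * t ^ j * (n - t) ^ (n - j)"
    unfolding choose pow ..
  also have "\<dots> = binomial_term n t j * ((n - j) * t)"
    unfolding binomial_term_def by (simp add: mult_ac)
  finally show ?thesis .
qed

lemma binomial_term_le_Suc: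
  assumes "t \<le> n" "j < t"
  shows "binomial_term n t j \<le> binomial_term n t (Suc j)"
proof (cases "n - t = 0")
  case True
  then have "binomial_term n t j = 0" unfolding binomial_term_def using assms by simp
  then show ?thesis by simp
next
  case False
  have "(n - t) * Suc j \<le> (n - j) * t" using assms by (intro mult_le_mono) auto
  then have "binomial_term n t j * (Suc j * (n - t)) \<le> binomial_term n t j * ((n - j) * t)"
    by (simp add: mult.commute)
  also have "\<dots> = binomial_term n t (Suc j) * (Suc j * (n - t))"
    using binomial_term_Suc[of j n t] assms by simp
  finally show ?thesis using False by simp
qed

lemma binomial_term_Suc_le:
  assumes "t \<le> j" "j < n"
  shows "binomial_term n t (Suc j) \<le> binomial_term n t j"
proof -
  have "binomial_term n t (Suc j) * (Suc j * (n - t)) = binomial_term n t j * ((n - j) * t)"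
    using binomial_term_Suc[OF assms(2)] .
  also have "\<dots> \<le> binomial_term n t j * (Suc j * (n - t))"
    using mult_le_mono[of "n - j" "n - t" t "Suc j"] assms
    by (intro mult_le_mono2) (simp add: mult.commute)
  finally show ?thesis using assms by simp
qed

lemma binomial_term_le_central:
  assumes "t \<le> n" "j \<le> n"
  shows "binomial_term n t j \<le> binomial_term n t t"
proof (cases "j \<le> t")
  case True
  then show ?thesis
  proof (induction j rule: inc_induct)
    case (step m)
    then show ?case using binomial_term_le_Suc[OF assms(1) step(2)] by simp
  qed simp
next
  case False
  then have "t \<le> j" by simp
  then show ?thesis using assms(2)
  proof (induction j rule: dec_induct)
    case (step m)
    then show ?case using binomial_term_Suc_le[of t m n] by simp
  qed simp
qed

lemma pow_self_le_binomial_central: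
  assumes "t \<le> n"
  shows "n ^ n \<le> (n + 1) * ((n choose t) * t ^ t * (n - t) ^ (n - t))"
proof -
  have "n ^ n = (t + (n - t)) ^ n" using assms by simp
  also have "\<dots> = (\<Sum>j\<le>n. binomial_term n t j)" by (simp add: binomial_ring binomial_term_def)
  also have "\<dots> \<le> (\<Sum>j\<le>n. binomial_term n t t)"
    using binomial_term_le_central[OF assms] by (intro sum_mono) simp
  finally show ?thesis by (simp add: binomial_term_def)
qed

lemma card_threshold_words_le:
  assumes "t \<le> n" "1 \<le> n"
  shows "card (threshold_words t {1..n}) * (2 * ln 2) ^ n \<le> 6 * (n + 1) * fact n"
proof -
  define r s where "r = 2 * ln 2 * t / n" and "s = 2 * ln 2 * real (n - t) / n"
  define P :: real where "P = real t ^ t * real (n - t) ^ (n - t)"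
  have "0 \<le> r" "0 \<le> s" "r + s = 2 * ln 2"
    using assms by (simp_all add: r_def s_def field_simps of_nat_diff)
  have "0 < real t ^ t" "0 < real (n - t) ^ (n - t)"
    by (cases "t = 0"; simp) (cases "n - t = 0"; simp)
  then have "0 < P" by (simp add: P_def)
  have weights: "r ^ t * s ^ (n - t) * real n ^ n = (2 * ln 2) ^ n * P"
  proof -
    have "real n ^ n = real n ^ t * real n ^ (n - t)"
      using assms(1) by (simp add: power_add[symmetric])
    then have "r ^ t * s ^ (n - t) * real n ^ n = (r * n) ^ t * (s * n) ^ (n - t)"
      by (simp add: power_mult_distrib mult_ac)
    also have "\<dots> = ((2 * ln 2) ^ t * (2 * ln 2) ^ (n - t)) * P"
      using assms(2) by (simp add: r_def s_def P_def power_mult_distrib mult_ac)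
    also have "(2 * ln 2) ^ t * (2 * ln 2) ^ (n - t) = ((2 * ln 2) ^ n :: real)"
      using assms(1) by (simp only: power_add[symmetric] le_add_diff_inverse)
    finally show ?thesis .
  qed
  have "card (threshold_words t {1..n}) * (2 * ln 2) ^ n * P
      = card (threshold_words t {1..n}) * r ^ t * s ^ (n - t) * real n ^ n"
    using weights by (simp add: mult_ac)
  also have "\<dots> \<le> 6 * fact t * fact (n - t) * real n ^ n"
    using card_threshold_words_weighted[OF \<open>0 \<le> r\<close> \<open>0 \<le> s\<close> \<open>r + s = 2 * ln 2\<close> assms(1)]
    by (intro mult_right_mono) auto
  also have "\<dots> \<le> 6 * fact t * fact (n - t) * ((n + 1) * (real (n choose t) * P))"
  proof -
    have "real (n ^ n) \<le> real ((n + 1) * ((n choose t) * t ^ t * (n - t) ^ (n - t)))"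
      using pow_self_le_binomial_central[OF assms(1)] by (simp only: of_nat_le_iff)
    then have "real n ^ n \<le> (n + 1) * (real (n choose t) * P)"
      by (simp add: P_def algebra_simps)
    then show ?thesis by (intro mult_left_mono) simp_all
  qed
  also have "\<dots> = 6 * (n + 1) * fact n * P"
    using assms(1) by (simp add: binomial_fact field_simps)
  finally show ?thesis using \<open>0 < P\<close> by (simp add: add.commute)
qed

lemma alpha_upper_bound:
  assumes "1 \<le> n"
  shows "alpha n * (2 * ln 2) ^ n \<le> 6 * (real n + 1) ^ 2 * fact n"
proof -
  have "real (alpha n) \<le> (\<Sum>t\<le>n. real (card (threshold_words t {1..n})))"
    unfolding of_nat_sum[symmetric] of_nat_le_iff by (rule alpha_le_card_threshold_words_sum)
  then have "alpha n * (2 * ln 2) ^ n \<le> (\<Sum>t\<le>n. card (threshold_words t {1..n})) * (2 * ln 2) ^ n"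
    by (intro mult_right_mono) auto
  also have "\<dots> = (\<Sum>t\<le>n. card (threshold_words t {1..n}) * (2 * ln 2) ^ n)"
    by (simp add: sum_distrib_right)
  also have "\<dots> \<le> (\<Sum>t\<le>n. 6 * (real n + 1) * fact n)"
    using card_threshold_words_le assms by (intro sum_mono) auto
  also have "\<dots> = 6 * (real n + 1) ^ 2 * fact n" by (simp add: power2_eq_square algebra_simps)
  finally show ?thesis .
qed

section \<open>Lower bound via ordered set partitions\<close>

fun ordered_partitions :: "'a set \<Rightarrow> nat \<Rightarrow> 'a set list set" where
  "ordered_partitions A 0 = (if A = {} then {[]} else {})"
| "ordered_partitions A (Suc k) =
     (\<Union>D\<in>{D. D \<subseteq> A \<and> D \<noteq> {}}. (#) D ` ordered_partitions (A - D) k)"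

fun ordered_partition_count :: "nat \<Rightarrow> nat \<Rightarrow> nat" where
  "ordered_partition_count m 0 = (if m = 0 then 1 else 0)"
| "ordered_partition_count m (Suc k) =
     (\<Sum>d=1..m. (m choose d) * ordered_partition_count (m - d) k)"

lemma finite_ordered_partitions: "finite A \<Longrightarrow> finite (ordered_partitions A k)"
  by (induction k arbitrary: A) auto

lemma card_ordered_partitions:
  "finite A \<Longrightarrow> card (ordered_partitions A k) = ordered_partition_count (card A) k"
proof (induction k arbitrary: A)
  case (Suc k)
  have "card (ordered_partitions A (Suc k))
      = (\<Sum>D | D \<subseteq> A \<and> D \<noteq> {}. card ((#) D ` ordered_partitions (A - D) k))"
    unfolding ordered_partitions.simps
    by (rule card_UN_disjoint) (auto simp: Suc.prems finite_ordered_partitions)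
  also have "\<dots> = (\<Sum>D | D \<subseteq> A \<and> D \<noteq> {}. ordered_partition_count (card A - card D) k)"
  proof (intro sum.cong refl)
    fix D assume D: "D \<in> {D. D \<subseteq> A \<and> D \<noteq> {}}"
    have "card ((#) D ` ordered_partitions (A - D) k) = card (ordered_partitions (A - D) k)"
      by (rule card_image) simp
    also have "\<dots> = ordered_partition_count (card A - card D) k"
      using Suc D finite_subset[of D A] by (simp add: card_Diff_subset)
    finally show "card ((#) D ` ordered_partitions (A - D) k) = ordered_partition_count (card A - card D) k" .
  qed
  also have "\<dots> = ordered_partition_count (card A) (Suc k)"
    using sum_nonempty_subsets_by_card[OF Suc.prems, of "\<lambda>d. ordered_partition_count (card A - d) k"]
    by simp
  finally show ?case .
qed simp

fun interleave_runs :: "nat set list \<Rightarrow> nat set list \<Rightarrow> nat list" where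
  "interleave_runs (P # Ps) (Q # Qs) =
     monotone_run True P @ monotone_run False Q @ interleave_runs Ps Qs"
| "interleave_runs _ _ = []"

lemma ascent_threshold_monotone_run:
  assumes "finite D" "\<forall>x\<in>D. (x \<le> t) = b"
  shows "ascent_threshold t (monotone_run b D)"
proof -
  have "ascent_threshold t xs" if "sorted_wrt (\<lambda>x y. if b then x < y else y < x) xs"
    "\<forall>x\<in>set xs. (x \<le> t) = b" for xs
    using that by (induction t xs rule: ascent_threshold.induct) auto
  then show ?thesis
    using assms by (cases b) (auto simp: monotone_run_def sorted_wrt_rev)
qed

lemma interleave_runs_in_threshold_words_from:
  assumes "Ps \<in> ordered_partitions L k" "Qs \<in> ordered_partitions H k" "finite L" "finite H"
    and "\<forall>x\<in>L. x \<le> t" "\<forall>x\<in>H. t < x"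
  shows "interleave_runs Ps Qs \<in> threshold_words_from t True (L \<union> H)"
  using assms
proof (induction k arbitrary: L H Ps Qs)
  case 0
  then show ?case by (auto split: if_splits)
next
  case (Suc k)
  from Suc.prems(1) obtain D Ps' where D: "D \<subseteq> L" "D \<noteq> {}" "Ps = D # Ps'"
    and Ps': "Ps' \<in> ordered_partitions (L - D) k" by auto
  from Suc.prems(2) obtain E Qs' where E: "E \<subseteq> H" "E \<noteq> {}" "Qs = E # Qs'"
    and Qs': "Qs' \<in> ordered_partitions (H - E) k" by auto
  have fin: "finite D" "finite E" using D E Suc.prems(3,4) finite_subset by auto
  let ?a = "monotone_run True D" and ?b = "monotone_run False E" and ?rest = "interleave_runs Ps' Qs'"
  have rest: "?rest \<in> threshold_words_from t True ((L - D) \<union> (H - E))"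
    using Suc.IH[OF Ps' Qs'] Suc.prems(3-6) by auto
  have sets: "set ?a = D" "set ?b = E" using fin by simp_all
  have ne: "?a \<noteq> []" "?b \<noteq> []" using sets D E by auto
  have low: "\<forall>x\<in>D. x \<le> t" and high: "\<forall>x\<in>E. t < x" using D E Suc.prems(5,6) by auto
  have "last ?b \<in> E" "hd ?b \<in> E" "last ?a \<in> D"
    using sets hd_in_set[OF ne(2)] last_in_set[OF ne(1)] last_in_set[OF ne(2)] by auto
  then have "t < last ?b" "t < hd ?b" "last ?a \<le> t" using low high by auto
  have "ascent_threshold t ?rest" "?rest = [] \<or> hd ?rest \<le> t"
    using rest by (auto simp: threshold_words_from_def threshold_words_def)
  moreover have "ascent_threshold t ?a"
    using fin(1) low by (intro ascent_threshold_monotone_run) auto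
  moreover have "ascent_threshold t ?b"
    using fin(2) high by (intro ascent_threshold_monotone_run) auto
  ultimately have "ascent_threshold t (?b @ ?rest)"
    using \<open>t < last ?b\<close> by (auto simp: ascent_threshold_append)
  then have asc: "ascent_threshold t (?a @ ?b @ ?rest)"
    using \<open>ascent_threshold t ?a\<close> ne \<open>t < hd ?b\<close> \<open>last ?a \<le> t\<close>
    by (auto simp: ascent_threshold_append)
  have "set ?rest = (L - D) \<union> (H - E)" "distinct ?rest"
    using rest by (auto simp: threshold_words_from_def threshold_words_def permutations_of_set_def)
  moreover have "L \<inter> H = {}" using Suc.prems(5,6) by fastforce
  ultimately have "distinct (?a @ ?b @ ?rest)" "set (?a @ ?b @ ?rest) = L \<union> H"
    using sets D(1) E(1) by (auto simp: monotone_run_def)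
  moreover have "hd (?a @ ?b @ ?rest) \<le> t" using ne sets low hd_in_set[OF ne(1)] by simp
  ultimately show ?case
    using asc D E by (simp add: threshold_words_from_def threshold_words_def permutations_of_set_def)
qed

lemma append_eq_append_split:
  assumes "\<forall>x\<in>set a. P x" "\<forall>x\<in>set a'. P x" "b = [] \<or> \<not> P (hd b)" "b' = [] \<or> \<not> P (hd b')"
    and "a @ b = a' @ b'"
  shows "a = a'" "b = b'"
proof -
  have "takeWhile P b = []" "takeWhile P b' = []" using assms(3,4) by (cases b; cases b'; auto)+
  then have "takeWhile P (a @ b) = a" "takeWhile P (a' @ b') = a'"
    using assms(1,2) by (simp_all add: takeWhile_append2)
  then show "a = a'" using assms(5) by simp
  then show "b = b'" using assms(5) by simp
qed

lemma interleave_runs_inj: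
  assumes "Ps1 \<in> ordered_partitions L k" "Qs1 \<in> ordered_partitions H k"
    and "Ps2 \<in> ordered_partitions L k" "Qs2 \<in> ordered_partitions H k"
    and "finite L" "finite H" "\<forall>x\<in>L. x \<le> t" "\<forall>x\<in>H. t < x"
    and "interleave_runs Ps1 Qs1 = interleave_runs Ps2 Qs2"
  shows "Ps1 = Ps2 \<and> Qs1 = Qs2"
  using assms
proof (induction k arbitrary: L H Ps1 Qs1 Ps2 Qs2)
  case 0
  then show ?case by (auto split: if_splits)
next
  case (Suc k)
  from Suc.prems(1) obtain D1 Ps1' where D1: "D1 \<subseteq> L" "D1 \<noteq> {}" "Ps1 = D1 # Ps1'"
    and Ps1': "Ps1' \<in> ordered_partitions (L - D1) k" by auto
  from Suc.prems(2) obtain E1 Qs1' where E1: "E1 \<subseteq> H" "E1 \<noteq> {}" "Qs1 = E1 # Qs1'"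
    and Qs1': "Qs1' \<in> ordered_partitions (H - E1) k" by auto
  from Suc.prems(3) obtain D2 Ps2' where D2: "D2 \<subseteq> L" "D2 \<noteq> {}" "Ps2 = D2 # Ps2'"
    and Ps2': "Ps2' \<in> ordered_partitions (L - D2) k" by auto
  from Suc.prems(4) obtain E2 Qs2' where E2: "E2 \<subseteq> H" "E2 \<noteq> {}" "Qs2 = E2 # Qs2'"
    and Qs2': "Qs2' \<in> ordered_partitions (H - E2) k" by auto
  have fin: "finite D1" "finite E1" "finite D2" "finite E2"
    using D1(1) E1(1) D2(1) E2(1) Suc.prems(5,6) by (auto intro: finite_subset)
  have rest_low: "interleave_runs Ps' Qs' = [] \<or> hd (interleave_runs Ps' Qs') \<le> t"
    if "Ps' \<in> ordered_partitions (L - D) k" "Qs' \<in> ordered_partitions (H - E) k" for D E Ps' Qs'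
    using interleave_runs_in_threshold_words_from[OF that] Suc.prems(5-8)
    by (auto simp: threshold_words_from_def)
  let ?b1 = "monotone_run False E1" and ?b2 = "monotone_run False E2"
  have "?b1 \<noteq> []" "?b2 \<noteq> []" using fin E1 E2 by (metis set_empty set_monotone_run)+
  then have "t < hd ?b1" "t < hd ?b2"
    using fin E1 E2 Suc.prems(8) hd_in_set by (metis set_monotone_run subsetD)+
  have eq: "monotone_run True D1 @ (?b1 @ interleave_runs Ps1' Qs1')
      = monotone_run True D2 @ (?b2 @ interleave_runs Ps2' Qs2')"
    using Suc.prems(9) D1 E1 D2 E2 by simp
  have "\<forall>x\<in>set (monotone_run True D1). x \<le> t" "\<forall>x\<in>set (monotone_run True D2). x \<le> t"
    "\<forall>x\<in>set ?b1. t < x" "\<forall>x\<in>set ?b2. t < x"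
    using fin D1(1) D2(1) E1(1) E2(1) Suc.prems(7,8) by auto
  note split = append_eq_append_split[OF this(1,2) _ _ eq] append_eq_append_split[OF this(3,4)]
  have a: "monotone_run True D1 = monotone_run True D2"
    and b: "?b1 @ interleave_runs Ps1' Qs1' = ?b2 @ interleave_runs Ps2' Qs2'"
    using split(1,2) \<open>t < hd ?b1\<close> \<open>t < hd ?b2\<close> \<open>?b1 \<noteq> []\<close> \<open>?b2 \<noteq> []\<close> by auto
  have "?b1 = ?b2" "interleave_runs Ps1' Qs1' = interleave_runs Ps2' Qs2'"
    using split(3,4)[OF _ _ b] rest_low[OF Ps1' Qs1'] rest_low[OF Ps2' Qs2'] by auto
  moreover have "D1 = D2" using a fin by (metis set_monotone_run)
  moreover have "E1 = E2" using \<open>?b1 = ?b2\<close> fin by (metis set_monotone_run)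
  ultimately have "Ps1' = Ps2' \<and> Qs1' = Qs2'"
    using Suc.IH[OF Ps1' Qs1'] Ps2' Qs2' Suc.prems(5-8) by auto
  then show ?case using D1 E1 D2 E2 \<open>D1 = D2\<close> \<open>E1 = E2\<close> by simp
qed

lemma ordered_partition_count_sq_le_alpha: "ordered_partition_count (n div 2) k ^ 2 \<le> alpha n"
proof -
  define h where "h = n div 2"
  define L H where "L = {1..h}" and "H = {h + 1..2 * h}"
  \<comment> \<open>for odd \<open>n\<close> the extra value \<open>n\<close> is larger than \<open>h\<close> and everything after it, so it goes in front\<close>
  define pre where "pre = (if odd n then [n] else [])"
  define f where "f = (\<lambda>(Ps, Qs). pre @ interleave_runs Ps Qs)"
  have fin: "finite L" "finite H" and low: "\<forall>x\<in>L. x \<le> h" and high: "\<forall>x\<in>H. h < x"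
    by (auto simp: L_def H_def)
  have "L \<union> H = {1..2 * h}" by (auto simp: L_def H_def)
  have "f ` (ordered_partitions L k \<times> ordered_partitions H k) \<subseteq> threshold_words h {1..n}"
  proof clarify
    fix Ps Qs assume "Ps \<in> ordered_partitions L k" "Qs \<in> ordered_partitions H k"
    then have w: "interleave_runs Ps Qs \<in> threshold_words_from h True {1..2 * h}"
      using interleave_runs_in_threshold_words_from[OF _ _ fin low high] \<open>L \<union> H = _\<close> by simp
    have "odd n \<Longrightarrow> n = 2 * h + 1" "even n \<Longrightarrow> n = 2 * h" by (simp_all add: h_def)
    then show "f (Ps, Qs) \<in> threshold_words h {1..n}"
      using w by (cases "odd n")
        (auto simp: f_def pre_def threshold_words_from_def threshold_words_def
          permutations_of_set_def ascent_threshold_Cons)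
  qed
  moreover have "inj_on f (ordered_partitions L k \<times> ordered_partitions H k)"
    using interleave_runs_inj[OF _ _ _ _ fin low high] by (auto simp: inj_on_def f_def)
  ultimately have "card (ordered_partitions L k \<times> ordered_partitions H k) \<le> card (threshold_words h {1..n})"
    by (intro card_inj_on_le) (auto simp: threshold_words_def intro: finite_subset)
  also have "\<dots> \<le> alpha n" by (rule card_threshold_words_le_alpha) (simp add: h_def)
  finally show ?thesis
    using card_ordered_partitions[OF fin(1), of k] card_ordered_partitions[OF fin(2), of k]
    by (simp add: card_cartesian_product power2_eq_square L_def H_def h_def)
qed

lemma ordered_partition_count_eq_0: "m < k \<Longrightarrow> ordered_partition_count m k = 0"
  by (induction k arbitrary: m) auto

lemma ordered_partition_count_1: "1 \<le> m \<Longrightarrow> ordered_partition_count m 1 = 1"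
proof -
  assume "1 \<le> m"
  have "ordered_partition_count m 1 = (\<Sum>d=1..m. (m choose d) * ordered_partition_count (m - d) 0)"
    by (simp add: One_nat_def)
  also have "\<dots> = (\<Sum>d=1..m. if d = m then 1 else 0)"
    by (intro sum.cong refl) auto
  also have "\<dots> = 1" using \<open>1 \<le> m\<close> by simp
  finally show ?thesis .
qed

definition fubini :: "nat \<Rightarrow> nat" where
  "fubini h = (\<Sum>k\<le>h. ordered_partition_count h k)"

lemma fubini_pos: "1 \<le> fubini h"
proof (cases "h = 0")
  case False
  then have "ordered_partition_count h 1 \<le> fubini h"
    unfolding fubini_def by (intro member_le_sum) auto
  then show ?thesis using ordered_partition_count_1[of h] False by simp
qed (simp add: fubini_def)

lemma fubini_rec:
  assumes "1 \<le> h"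
  shows "fubini h = (\<Sum>d=1..h. (h choose d) * fubini (h - d))"
proof -
  obtain h' where h': "h = Suc h'" using assms by (cases h) auto
  have "fubini h = (\<Sum>k\<le>h'. \<Sum>d=1..h. (h choose d) * ordered_partition_count (h - d) k)"
    unfolding fubini_def h' sum.atMost_Suc_shift by simp
  also have "\<dots> = (\<Sum>d=1..h. (h choose d) * (\<Sum>k\<le>h'. ordered_partition_count (h - d) k))"
    by (subst sum.swap) (simp add: sum_distrib_left)
  also have "\<dots> = (\<Sum>d=1..h. (h choose d) * fubini (h - d))"
  proof (intro sum.cong refl arg_cong[where f = "(*) _"])
    fix d assume "d \<in> {1..h}"
    then show "(\<Sum>k\<le>h'. ordered_partition_count (h - d) k) = fubini (h - d)"
      unfolding fubini_def using h' ordered_partition_count_eq_0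
      by (intro sum.mono_neutral_right) auto
  qed
  finally show ?thesis .
qed

lemma exp_partial_sum_ge_one:
  fixes y :: real
  assumes "ln 2 < y"
  obtains b where "1 \<le> (\<Sum>d=1..b. y ^ d / fact d)"
proof -
  have "0 < y" using assms ln_gt_zero[of 2] by linarith
  have "exp (ln 2) < exp y" using assms exp_less_cancel_iff by blast
  then have "2 < exp y" by simp
  moreover have "(\<lambda>N. \<Sum>d<N. y ^ d / fact d) \<longlonglongrightarrow> exp y"
    using exp_converges[of y] by (simp add: sums_def divide_inverse mult.commute scaleR_conv_of_real)
  ultimately have "eventually (\<lambda>N. 2 < (\<Sum>d<N. y ^ d / fact d)) sequentially"
    by (simp add: order_tendstoD(1))
  then obtain N where N: "2 < (\<Sum>d<N. y ^ d / fact d)"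
    by (auto simp: eventually_sequentially)
  have "(\<Sum>d<N. y ^ d / fact d) \<le> (\<Sum>d=0..N. y ^ d / fact d)"
    using \<open>0 < y\<close> by (intro sum_mono2) auto
  also have "\<dots> = 1 + (\<Sum>d=1..N. y ^ d / fact d)" by (simp add: sum.atLeast_Suc_atMost)
  finally have "1 \<le> (\<Sum>d=1..N. y ^ d / fact d)" using N by simp
  then show ?thesis by (rule that)
qed

lemma fubini_mult_pow_rec:
  fixes y :: real
  assumes "1 \<le> h"
  shows "fubini h * y ^ h = (\<Sum>d=1..h. (h choose d) * (fubini (h - d) * y ^ (h - d)) * y ^ d)"
proof -
  have "fubini h * y ^ h = (\<Sum>d=1..h. (h choose d) * fubini (h - d) * y ^ h)"
    using fubini_rec[OF assms] by (simp add: sum_distrib_right)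
  also have "\<dots> = (\<Sum>d=1..h. (h choose d) * (fubini (h - d) * y ^ (h - d)) * y ^ d)"
    by (intro sum.cong refl) (simp add: mult.assoc power_add[symmetric])
  finally show ?thesis .
qed

lemma fubini_lower_bound:
  fixes y :: real
  assumes "ln 2 < y"
  obtains C where "0 < C" "\<And>h. C * fact h \<le> fubini h * y ^ h"
proof -
  have "0 < y" using assms ln_gt_zero[of 2] by linarith
  obtain b where b: "1 \<le> (\<Sum>d=1..b. y ^ d / fact d)" using exp_partial_sum_ge_one[OF assms] .
  define C where "C = min 1 (y ^ b) / fact b"
  have "0 < C" using \<open>0 < y\<close> by (simp add: C_def)
  have "C * fact h \<le> fubini h * y ^ h" for h
  proof (induction h rule: less_induct)
    case (less h)
    show ?case
    proof (cases "h \<le> b")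
      case True
      have "min 1 (y ^ b) \<le> y ^ h"
        using True \<open>0 < y\<close> power_decreasing[of h b y] by (cases "y \<le> 1") (auto simp: min_le_iff_disj)
      moreover have "fact h \<le> (fact b :: real)" using True by (rule fact_mono)
      ultimately have "C * fact h \<le> y ^ h"
        using \<open>0 < y\<close> by (simp add: C_def field_simps mult_mono)
      also have "\<dots> \<le> fubini h * y ^ h"
        using fubini_pos[of h] \<open>0 < y\<close> by simp
      finally show ?thesis .
    next
      case False
      have "(\<Sum>d=1..b. y ^ d / fact d) \<le> (\<Sum>d=1..h. y ^ d / fact d)"
        using False \<open>0 < y\<close> by (intro sum_mono2) auto
      then have "C * fact h \<le> C * fact h * (\<Sum>d=1..h. y ^ d / fact d)"
        using b \<open>0 < C\<close> by simp
      also have "\<dots> = (\<Sum>d=1..h. (h choose d) * (C * fact (h - d)) * y ^ d)"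
        unfolding sum_distrib_left by (intro sum.cong refl) (simp add: binomial_fact)
      also have "\<dots> \<le> (\<Sum>d=1..h. (h choose d) * (fubini (h - d) * y ^ (h - d)) * y ^ d)"
        using less \<open>0 < y\<close> by (intro sum_mono mult_right_mono mult_left_mono) auto
      also have "\<dots> = fubini h * y ^ h"
        using False by (intro fubini_mult_pow_rec[symmetric]) simp
      finally show ?thesis .
    qed
  qed
  with \<open>0 < C\<close> show ?thesis by (rule that)
qed

lemma fubini_sq_le_alpha: "fubini (n div 2) ^ 2 \<le> (n div 2 + 1) ^ 2 * alpha n"
proof -
  define h where "h = n div 2"
  have "\<exists>k\<le>h. fubini h \<le> (h + 1) * ordered_partition_count h k"
  proof (rule ccontr)
    assume none: "\<not> ?thesis"
    have "(h + 1) * ordered_partition_count h k < fubini h" if "k \<le> h" for k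
      using none that not_le by blast
    then have "(\<Sum>k\<le>h. (h + 1) * ordered_partition_count h k) < (\<Sum>k\<le>h. fubini h)"
      by (intro sum_strict_mono) auto
    then show False unfolding sum_distrib_left[symmetric] fubini_def[symmetric] by simp
  qed
  then obtain k where "fubini h \<le> (h + 1) * ordered_partition_count h k" by blast
  then have "fubini h ^ 2 \<le> (h + 1) ^ 2 * ordered_partition_count h k ^ 2"
    by (simp add: power_mono flip: power_mult_distrib)
  also have "\<dots> \<le> (h + 1) ^ 2 * alpha n"
    using ordered_partition_count_sq_le_alpha[of n k] by (simp add: h_def)
  finally show ?thesis by (simp add: h_def)
qed

lemma fact_le_central_binomial_bound:
  "fact n \<le> (real n + 1) * 4 ^ (n div 2) * fact (n div 2) ^ 2"
proof -
  define h where "h = n div 2"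
  have "fact (2 * h) = real (2 * h choose h) * fact h ^ 2"
    by (simp add: binomial_fact power2_eq_square)
  also have "\<dots> \<le> 4 ^ h * fact h ^ 2"
    using binomial_le_pow2[of "2 * h" h] by (intro mult_right_mono) (simp_all add: power_mult)
  finally have central: "fact (2 * h) \<le> 4 ^ h * (fact h :: real) ^ 2" .
  have "fact n \<le> (real n + 1) * fact (2 * h)"
  proof (cases "even n")
    case True
    then show ?thesis by (simp add: h_def)
  next
    case False
    then have "n = Suc (2 * h)" by (simp add: h_def)
    then show ?thesis by (simp add: mult_right_mono)
  qed
  also have "\<dots> \<le> (real n + 1) * (4 ^ h * fact h ^ 2)" using central by (intro mult_left_mono) auto
  finally show ?thesis by (simp add: h_def mult_ac)
qed

lemma alpha_lower_bound:
  fixes y :: real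
  assumes "ln 2 < y"
  obtains C where "0 < C" "\<And>n. C * fact n \<le> alpha n * (2 * y) ^ n * (real n + 1) ^ 3"
proof -
  have "0 < y" and "1 \<le> 2 * y" using assms ln_gt_zero[of 2] ln2_ge_two_thirds by linarith+
  obtain C where "0 < C" and C: "\<And>h. C * fact h \<le> fubini h * y ^ h"
    using fubini_lower_bound[OF assms] by blast
  have "C\<^sup>2 * fact n \<le> alpha n * (2 * y) ^ n * (real n + 1) ^ 3" for n
  proof -
    define h where "h = n div 2"
    have "(C * fact h) ^ 2 \<le> (fubini h * y ^ h) ^ 2"
      using C[of h] \<open>0 < C\<close> by (intro power_mono) auto
    also have "\<dots> \<le> (real h + 1) ^ 2 * alpha n * (y ^ h) ^ 2"
    proof -
      have "real (fubini h ^ 2) \<le> real ((h + 1) ^ 2 * alpha n)"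
        using fubini_sq_le_alpha[of n] unfolding h_def by (simp only: of_nat_le_iff)
      then show ?thesis unfolding power_mult_distrib by (intro mult_right_mono) (simp_all add: add.commute)
    qed
    finally have sq: "(C * fact h) ^ 2 \<le> (real h + 1) ^ 2 * alpha n * (y ^ h) ^ 2" .
    have "C\<^sup>2 * fact n \<le> C\<^sup>2 * ((real n + 1) * 4 ^ h * fact h ^ 2)"
      using fact_le_central_binomial_bound[of n] by (intro mult_left_mono) (simp_all add: h_def)
    also have "\<dots> = (real n + 1) * 4 ^ h * (C * fact h) ^ 2"
      by (simp add: power_mult_distrib mult_ac)
    also have "\<dots> \<le> (real n + 1) * 4 ^ h * ((real h + 1) ^ 2 * alpha n * (y ^ h) ^ 2)"
      using sq by (intro mult_left_mono) auto
    also have "\<dots> = alpha n * (2 * y) ^ (2 * h) * ((real n + 1) * (real h + 1) ^ 2)"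
      using power_mult_distrib[of "2::real" 2 h]
      by (simp add: power_mult_distrib power_mult power2_eq_square mult_ac)
    also have "\<dots> \<le> alpha n * (2 * y) ^ n * ((real n + 1) * (real n + 1) ^ 2)"
    proof -
      have "(2 * y) ^ (2 * h) \<le> (2 * y) ^ n"
        using \<open>1 \<le> 2 * y\<close> by (intro power_increasing) (auto simp: h_def)
      moreover have "(real h + 1) ^ 2 \<le> (real n + 1) ^ 2"
        by (intro power_mono) (auto simp: h_def)
      ultimately show ?thesis
        using \<open>0 < y\<close> by (intro mult_mono mult_left_mono) auto
    qed
    finally show ?thesis by (simp add: power2_eq_square power3_eq_cube)
  qed
  moreover have "0 < C\<^sup>2" using \<open>0 < C\<close> by simp
  ultimately show ?thesis using that by blast
qed

section \<open>Asymptotics\<close>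

lemma powr_inverse_divide_power:
  fixes b x :: real
  assumes "0 \<le> b" "0 < x" "1 \<le> n"
  shows "(b / x ^ n) powr (1 / real n) = b powr (1 / real n) / x"
  using assms by (simp add: powr_divide powr_realpow[symmetric] powr_powr)

lemma alpha_root_upper:
  assumes "1 \<le> n"
  shows "(alpha n / fact n) powr (1 / real n) \<le> (6 * (real n + 1) ^ 2) powr (1 / real n) / (2 * ln 2)"
proof -
  have "alpha n / fact n \<le> 6 * (real n + 1) ^ 2 / (2 * ln 2) ^ n"
    using alpha_upper_bound[OF assms] by (simp add: field_simps)
  then have "(alpha n / fact n) powr (1 / real n) \<le> (6 * (real n + 1) ^ 2 / (2 * ln 2) ^ n) powr (1 / real n)"
    by (intro powr_mono2) auto
  also have "\<dots> = (6 * (real n + 1) ^ 2) powr (1 / real n) / (2 * ln 2)"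
    using assms by (intro powr_inverse_divide_power) auto
  finally show ?thesis .
qed

lemma alpha_root_lower:
  fixes y C :: real
  assumes "0 < y" "0 < C" "1 \<le> n" "C * fact n \<le> alpha n * (2 * y) ^ n * (real n + 1) ^ 3"
  shows "(C / (real n + 1) ^ 3) powr (1 / real n) / (2 * y) \<le> (alpha n / fact n) powr (1 / real n)"
proof -
  have "C / (real n + 1) ^ 3 / (2 * y) ^ n \<le> alpha n / fact n"
    using assms by (simp add: field_simps)
  then have "(C / (real n + 1) ^ 3 / (2 * y) ^ n) powr (1 / real n) \<le> (alpha n / fact n) powr (1 / real n)"
    using assms by (intro powr_mono2) auto
  moreover have "(C / (real n + 1) ^ 3 / (2 * y) ^ n) powr (1 / real n)
      = (C / (real n + 1) ^ 3) powr (1 / real n) / (2 * y)"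
    using assms by (intro powr_inverse_divide_power) auto
  ultimately show ?thesis by simp
qed

lemma alpha_root_tendsto:
  "((\<lambda>n. (real (alpha n) / fact n) powr (1 / real n)) \<longlongrightarrow> 1 / (2 * ln 2)) sequentially"
  (is "(?g \<longlongrightarrow> ?L) _")
proof (rule order_tendstoI)
  fix a assume "?L < a"
  have "(\<lambda>n. (6 * (real n + 1) ^ 2) powr (1 / real n)) \<longlonglongrightarrow> 1"
    by real_asymp
  then have "((\<lambda>n. (6 * (real n + 1) ^ 2) powr (1 / real n) / (2 * ln 2)) \<longlongrightarrow> 1 / (2 * ln 2)) sequentially"
    by (intro tendsto_divide tendsto_const) auto
  then have "eventually (\<lambda>n. (6 * (real n + 1) ^ 2) powr (1 / real n) / (2 * ln 2) < a) sequentially"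
    using \<open>?L < a\<close> by (rule order_tendstoD)
  then show "eventually (\<lambda>n. ?g n < a) sequentially"
    using eventually_ge_at_top[of 1] by eventually_elim (use alpha_root_upper in fastforce)
next
  fix a assume "a < ?L"
  have "max a 0 < ?L" using \<open>a < ?L\<close> by simp
  then obtain b where "max a 0 < b" "b < ?L" using dense by blast
  then have "a < b" "0 < b" by simp_all
  define y where "y = 1 / (2 * b)"
  have "0 < y" "ln 2 < y"
    using \<open>0 < b\<close> \<open>b < ?L\<close> by (auto simp: y_def field_simps)
  obtain C where "0 < C" and C: "\<And>n. C * fact n \<le> alpha n * (2 * y) ^ n * (real n + 1) ^ 3"
    using alpha_lower_bound[OF \<open>ln 2 < y\<close>] by blast
  have "(\<lambda>n. (C / (real n + 1) ^ 3) powr (1 / real n)) \<longlonglongrightarrow> 1"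
    using \<open>0 < C\<close> by real_asymp
  then have "((\<lambda>n. (C / (real n + 1) ^ 3) powr (1 / real n) / (2 * y)) \<longlongrightarrow> 1 / (2 * y)) sequentially"
    using \<open>0 < y\<close> by (intro tendsto_divide tendsto_const) auto
  moreover have "a < 1 / (2 * y)" using \<open>a < b\<close> \<open>0 < b\<close> by (simp add: y_def)
  ultimately have "eventually (\<lambda>n. a < (C / (real n + 1) ^ 3) powr (1 / real n) / (2 * y)) sequentially"
    by (rule order_tendstoD)
  then show "eventually (\<lambda>n. a < ?g n) sequentially"
    using eventually_ge_at_top[of 1]
    by eventually_elim (use alpha_root_lower[OF \<open>0 < y\<close> \<open>0 < C\<close> _ C] in fastforce)
qed

lemma alpha_eq_root_pow:
  "real (alpha n) = ((real (alpha n) / fact n) powr (1 / real n)) ^ n * fact n"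
proof (cases "n = 0")
  case False
  then have "((real (alpha n) / fact n) powr (1 / real n)) ^ n = real (alpha n) / fact n"
    by (cases "alpha n = 0") (simp_all add: powr_power)
  then show ?thesis by simp
qed (simp add: alpha_0)

theorem corollary1p4:
  shows "((\<lambda>n. (real (alpha n) / fact n) powr (1 / real n))
            \<longlongrightarrow> 1 / (2 * ln 2)) sequentially
         \<and> (\<forall>n. alpha n \<le> alpha_21_34 n)
         \<and> (\<exists>e :: nat \<Rightarrow> real. e \<longlonglongrightarrow> 0 \<and>
              (\<forall>n. real (alpha n) = (1 / (2 * ln 2) + e n) ^ n * fact n))"
proof (intro conjI)
  let ?e = "\<lambda>n. (real (alpha n) / fact n) powr (1 / real n) - 1 / (2 * ln 2)"
  have "?e \<longlonglongrightarrow> 0"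
    using tendsto_diff[OF alpha_root_tendsto tendsto_const[of "1 / (2 * ln 2)"]] by simp
  moreover have "\<forall>n. real (alpha n) = (1 / (2 * ln 2) + ?e n) ^ n * fact n"
    using alpha_eq_root_pow by simp
  ultimately show "\<exists>e :: nat \<Rightarrow> real. e \<longlonglongrightarrow> 0 \<and>
      (\<forall>n. real (alpha n) = (1 / (2 * ln 2) + e n) ^ n * fact n)"
    by blast
qed (use alpha_root_tendsto alpha_le_alpha_21_34 in auto)

end
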